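(* In the setting of the context, let $V$ be the exact output covariance matrix and $V_a$ the block-diagonal approximate covariance matrix. Then $$\|V-V_a\|^2\le e^{4r}N^4\big(\eta+2\sqrt{\eta}\big)^2,$$ where $\|\cdot\|$ is the Frobenius norm and $\eta=\max_\alpha\eta_\alpha$.
   Context: $M$ modes partitioned into $N$ disjoint sublattices $\mathcal L_1,\dots,\mathcal L_N$ (each of $M/N$ modes), each containing exactly one source mode $s_\alpha$. A passive linear-optical circuit with $M\times M$ unitary $U$ ($\hat a_j\mapsto\sum_kU_{jk}\hat a_k$) has real orthogonal symplectic representation $O$. Covariance conventions: $\hat x_j=(\hat a_j+\hat a_j^\dagger)/\sqrt2$, $\hat p_j=i(\hat a_j^\dagger-\hat a_j)/\sqrt2$, $V_{jk}=\tfrac12\mathrm{Tr}[\hat\rho\{\hat Q_j,\hat Q_k\}]$ with $\hat Q=(\hat x_1,\hat p_1,\dots,\hat x_M,\hat p_M)$, vacuum $=\mathbb 1/2$. Input: each source mode is a squeezed vacuum with parameter $r>0$ (covariance block $\tfrac12\mathrm{diag}(e^{2r},e^{-2r})$), all other modes vacuum; $V_{\mathrm{in}}$ is its covariance and $V=OV_{\mathrm{in}}O^T$. For each $\alpha$, let $V^{(\alpha)}_{\mathrm{in}}$ be the covariance with only $s_\alpha$ squeezed and all other modes vacuum, and let $v'_\alpha$ be the restriction of $OV^{(\alpha)}_{\mathrm{in}}O^T$ to the quadratures of modes in $\mathcal L_\alpha$. $V_a$ is the block-diagonal matrix (with respect to the sublattice partition) with diagonal blocks $v'_1,\dots,v'_N$,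 i.e. the covariance of the product state $\bigotimes_\alpha\hat\rho_\alpha$. The leakage rate of source $\alpha$ is $\eta_\alpha=\sum_{j\notin\mathcal L_\alpha}|U_{j,s_\alpha}|^2$. *)

theory Defs
  imports Complex_Main
begin

(* Matrices are functions nat => nat => _ with explicit bounds.
   Quadrature index convention (0-based): quadrature 2*j is x_j, 2*j+1 is p_j,
   for modes j < M. *)

definition unitary_mat :: "nat \<Rightarrow> (nat \<Rightarrow> nat \<Rightarrow> complex) \<Rightarrow> bool" where
  "unitary_mat M U \<longleftrightarrow>
     (\<forall>j<M. \<forall>l<M. (\<Sum>k<M. U j k * cnj (U l k)) = (if j = l then 1 else 0))"

(* real orthogonal symplectic representation O of the mode map a_j -> sum_k U_jk a_k,
   with x = (a + a^dag)/sqrt 2, p = i(a^dag - a)/sqrt 2: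
   x_j -> sum_k (Re U_jk x_k - Im U_jk p_k),  p_j -> sum_k (Im U_jk x_k + Re U_jk p_k) *)
definition realrep :: "(nat \<Rightarrow> nat \<Rightarrow> complex) \<Rightarrow> nat \<Rightarrow> nat \<Rightarrow> real" where
  "realrep U q q' =
     (let u = U (q div 2) (q' div 2) in
      if even q \<and> even q' then Re u
      else if even q \<and> odd q' then - Im u
      else if odd q \<and> even q' then Im u
      else Re u)"

definition cov_transform :: "nat \<Rightarrow> (nat \<Rightarrow> nat \<Rightarrow> real) \<Rightarrow> (nat \<Rightarrow> nat \<Rightarrow> real) \<Rightarrow> nat \<Rightarrow> nat \<Rightarrow> real" where
  "cov_transform M R V q q' = (\<Sum>a<2*M. \<Sum>b<2*M. R q a * V a b * R q' b)"

(* input covariance: modes in S are squeezed vacua with parameter r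
   (block 1/2 diag(e^{2r}, e^{-2r})), all other modes vacuum (1/2 identity) *)
definition sq_input :: "nat set \<Rightarrow> real \<Rightarrow> nat \<Rightarrow> nat \<Rightarrow> real" where
  "sq_input S r q q' =
     (if q = q' then
        (if q div 2 \<in> S then (if even q then exp (2*r) / 2 else exp (-2*r) / 2) else 1/2)
      else 0)"

definition exact_cov :: "nat \<Rightarrow> nat \<Rightarrow> (nat \<Rightarrow> nat) \<Rightarrow> real \<Rightarrow> (nat \<Rightarrow> nat \<Rightarrow> complex) \<Rightarrow> nat \<Rightarrow> nat \<Rightarrow> real" where
  "exact_cov M N s r U = cov_transform M (realrep U) (sq_input (s ` {..<N}) r)"

(* block-diagonal approximation V_a: block alpha is the restriction to L_alpha of
   O V_in^(alpha) O^T; off-diagonal blocks are zero. lat j is the sublattice of mode j. *)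
definition approx_cov :: "nat \<Rightarrow> (nat \<Rightarrow> nat) \<Rightarrow> (nat \<Rightarrow> nat) \<Rightarrow> real \<Rightarrow> (nat \<Rightarrow> nat \<Rightarrow> complex) \<Rightarrow> nat \<Rightarrow> nat \<Rightarrow> real" where
  "approx_cov M lat s r U q q' =
     (if lat (q div 2) = lat (q' div 2)
      then cov_transform M (realrep U) (sq_input {s (lat (q div 2))} r) q q'
      else 0)"

definition leakage :: "nat \<Rightarrow> (nat \<Rightarrow> nat) \<Rightarrow> (nat \<Rightarrow> nat) \<Rightarrow> (nat \<Rightarrow> nat \<Rightarrow> complex) \<Rightarrow> nat \<Rightarrow> real" where
  "leakage M lat s U \<alpha> = (\<Sum>j | j < M \<and> lat j \<noteq> \<alpha>. (cmod (U j (s \<alpha>)))^2)"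

definition frob_sq :: "nat \<Rightarrow> (nat \<Rightarrow> nat \<Rightarrow> real) \<Rightarrow> real" where
  "frob_sq M A = (\<Sum>q<2*M. \<Sum>q'<2*M. (A q q')^2)"

end

theory Submission
  imports Defs "HOL-Analysis.Convex"
begin

(* Squeezing source s_alpha adds to O V_in O^T a rank-two term G_alpha, and V - V_a is the sum over
   alpha of G_alpha with its L_alpha-diagonal block removed (the vacuum part 1/2 O O^T is the
   identity, which V_a reproduces exactly). Each entry of G_alpha is bounded by
   sinh(2r) |U_{j s_alpha}| |U_{j' s_alpha}|; since the column of s_alpha has norm at most 1, the
   mass of this product outside the L_alpha x L_alpha block is at most 2 eta_alpha. Cauchy-Schwarz
   over the N sources and 4 sinh(2r)^2 <= e^(4r) finish the estimate. *)

lemma sum_lessThan_double: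
  "(\<Sum>a<2*(M::nat). f a) = (\<Sum>k<M. f (2*k) + f (2*k+1) :: 'a :: comm_monoid_add)"
  by (induction M) (simp_all add: algebra_simps)

lemma sum_lessThan_double_div2:
  "(\<Sum>q<2*(M::nat). g (q div 2)) = 2 * (\<Sum>k<M. g k :: real)"
  by (simp add: sum_lessThan_double sum_distrib_left)

lemma unitary_mat_column_sq_sum_le_1:
  assumes U: "unitary_mat M U" and m: "m < M"
  shows "(\<Sum>j<M. (cmod (U j m))^2) \<le> 1"
proof -
  define c where "c j = U j m" for j
  \<comment> \<open>Bessel's inequality: w is the unit vector e_m minus its projection onto the rows of U.\<close>
  define w where "w k = (if k = m then 1 else 0) - (\<Sum>j<M. cnj (c j) * U j k)" for k
  have cnj_w: "cnj (w k) = (if k = m then 1 else 0) - (\<Sum>l<M. c l * cnj (U l k))" for k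
    by (simp add: w_def)
  have w_orth: "(\<Sum>k<M. U j k * cnj (w k)) = 0" if "j < M" for j
  proof -
    have "(\<Sum>k<M. U j k * cnj (w k))
        = (\<Sum>k<M. U j k * (if k = m then 1 else 0)) - (\<Sum>k<M. \<Sum>l<M. c l * (U j k * cnj (U l k)))"
      by (simp add: cnj_w right_diff_distrib sum_subtractf sum_distrib_left mult.left_commute)
    also have "(\<Sum>k<M. \<Sum>l<M. c l * (U j k * cnj (U l k))) = (\<Sum>l<M. c l * (\<Sum>k<M. U j k * cnj (U l k)))"
      by (subst sum.swap) (simp add: sum_distrib_left)
    also have "\<dots> = (\<Sum>l<M. if j = l then c l else 0)"
      using U that unfolding unitary_mat_def by (intro sum.cong) auto
    also have "(\<Sum>k<M. U j k * (if k = m then 1 else 0)) = c j"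
      using m by (simp add: c_def if_distrib[of "(*) (U j _)"] cong: if_cong)
    finally show ?thesis using that by simp
  qed
  have "(\<Sum>k<M. w k * cnj (w k))
      = (\<Sum>k<M. (if k = m then 1 else 0) * cnj (w k)) - (\<Sum>k<M. \<Sum>j<M. cnj (c j) * (U j k * cnj (w k)))"
    by (simp add: w_def[of k for k] left_diff_distrib sum_subtractf sum_distrib_right mult.assoc)
  also have "(\<Sum>k<M. \<Sum>j<M. cnj (c j) * (U j k * cnj (w k))) = (\<Sum>j<M. cnj (c j) * (\<Sum>k<M. U j k * cnj (w k)))"
    by (subst sum.swap) (simp add: sum_distrib_left)
  also have "(\<Sum>j<M. cnj (c j) * (\<Sum>k<M. U j k * cnj (w k))) = 0"
    by (intro sum.neutral) (simp add: w_orth)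
  also have "(\<Sum>k<M. (if k = m then 1 else 0) * cnj (w k)) = cnj (w m)"
    using m by (simp add: if_distrib[where f="\<lambda>x. x * cnj (w _)"] cong: if_cong)
  also have "cnj (w m) = 1 - (\<Sum>j<M. c j * cnj (c j))"
    by (simp add: w_def c_def)
  finally have "complex_of_real (\<Sum>k<M. (cmod (w k))^2) = of_real (1 - (\<Sum>j<M. (cmod (c j))^2))"
    by (simp only: of_real_sum of_real_diff of_real_1 complex_norm_square diff_zero)
  then have "(\<Sum>k<M. (cmod (w k))^2) = 1 - (\<Sum>j<M. (cmod (c j))^2)"
    by (rule of_real_eq_iff[THEN iffD1])
  moreover have "0 \<le> (\<Sum>k<M. (cmod (w k))^2)" by (simp add: sum_nonneg)
  ultimately show ?thesis by (simp add: c_def)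
qed

lemma realrep_even: "realrep U q (2*k) = (if even q then Re (U (q div 2) k) else Im (U (q div 2) k))"
  by (simp add: realrep_def Let_def)

lemma realrep_odd: "realrep U q (2*k+1) = (if even q then - Im (U (q div 2) k) else Re (U (q div 2) k))"
  by (simp add: realrep_def Let_def)

lemma realrep_rows_orthogonal:
  assumes U: "unitary_mat M U" and "q div 2 < M" "q' div 2 < M" "q div 2 \<noteq> q' div 2"
  shows "(\<Sum>a<2*M. realrep U q a * realrep U q' a) = 0"
proof -
  define z where "z = (\<Sum>k<M. U (q div 2) k * cnj (U (q' div 2) k))"
  have "z = 0" using U assms unfolding z_def unitary_mat_def by auto
  moreover have "(\<Sum>a<2*M. realrep U q a * realrep U q' a) =
     (if even q then (if even q' then Re z else - Im z) else (if even q' then Im z else Re z))"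
    unfolding sum_lessThan_double realrep_even realrep_odd z_def
    by (cases "even q"; cases "even q'") (simp_all add: Re_sum Im_sum algebra_simps sum_negf sum_subtractf)
  ultimately show ?thesis by simp
qed

definition squeeze_contrib :: "(nat \<Rightarrow> nat \<Rightarrow> real) \<Rightarrow> real \<Rightarrow> nat \<Rightarrow> nat \<Rightarrow> nat \<Rightarrow> real" where
  "squeeze_contrib R r q q' m =
     (exp (2*r) - 1) / 2 * R q (2*m) * R q' (2*m) + (exp (-2*r) - 1) / 2 * R q (2*m+1) * R q' (2*m+1)"

lemma cov_transform_sq_input:
  assumes "S \<subseteq> {..<M}"
  shows "cov_transform M R (sq_input S r) q q'
     = 1/2 * (\<Sum>a<2*M. R q a * R q' a) + (\<Sum>m\<in>S. squeeze_contrib R r q q' m)"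
proof -
  define e where "e a = (if a div 2 \<in> S then (if even a then exp (2*r) - 1 else exp (-2*r) - 1) / 2 else 0)"
    for a :: nat
  have diagonal: "(\<Sum>b<2*M. R q a * sq_input S r a b * R q' b) = R q a * (1/2 + e a) * R q' a"
    if "a < 2*M" for a
  proof -
    have "(\<Sum>b<2*M. R q a * sq_input S r a b * R q' b) = (\<Sum>b<2*M. if b = a then R q a * (1/2 + e a) * R q' a else 0)"
      by (intro sum.cong refl) (auto simp: sq_input_def e_def diff_divide_distrib)
    then show ?thesis using that by simp
  qed
  have "cov_transform M R (sq_input S r) q q' = (\<Sum>a<2*M. R q a * (1/2 + e a) * R q' a)"
    unfolding cov_transform_def by (intro sum.cong refl) (simp add: diagonal)
  also have "\<dots> = 1/2 * (\<Sum>a<2*M. R q a * R q' a) + (\<Sum>a<2*M. e a * R q a * R q' a)"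
    by (simp add: algebra_simps sum.distrib sum_distrib_left)
  also have "(\<Sum>a<2*M. e a * R q a * R q' a) = (\<Sum>m<M. if m \<in> S then squeeze_contrib R r q q' m else 0)"
    unfolding sum_lessThan_double by (intro sum.cong refl) (simp add: e_def squeeze_contrib_def)
  also have "\<dots> = (\<Sum>m\<in>S. squeeze_contrib R r q q' m)"
    using assms by (simp add: sum.inter_restrict[symmetric] Int_absorb1)
  finally show ?thesis .
qed

lemma squeeze_weight_eq_sinh:
  assumes "0 \<le> (r::real)"
  shows "\<bar>(exp (2*r) - 1) / 2\<bar> + \<bar>(exp (-2*r) - 1) / 2\<bar> = sinh (2*r)"
  using assms by (simp add: sinh_def field_simps)

lemma four_sinh_sq_le_exp:
  assumes "0 \<le> (r::real)"
  shows "4 * (sinh (2*r))^2 \<le> exp (4*r)"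
proof -
  have "0 \<le> sinh (2*r)" "sinh (2*r) \<le> exp (2*r) / 2"
    using assms by (simp_all add: sinh_def)
  then have "(2 * sinh (2*r))^2 \<le> (exp (2*r))^2"
    by (intro power_mono) auto
  then show ?thesis by (simp add: power_mult_distrib exp_double[symmetric] mult.commute)
qed

lemma abs_add_mult_le:
  fixes p d x y z w A B :: real
  assumes "\<bar>x\<bar> \<le> A" "\<bar>z\<bar> \<le> A" "\<bar>y\<bar> \<le> B" "\<bar>w\<bar> \<le> B"
  shows "\<bar>p*x*y + d*z*w\<bar> \<le> (\<bar>p\<bar> + \<bar>d\<bar>) * A * B"
proof -
  have "0 \<le> A" using assms(1) by linarith
  then have "\<bar>p*x*y\<bar> \<le> \<bar>p\<bar>*A*B" "\<bar>d*z*w\<bar> \<le> \<bar>d\<bar>*A*B"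
    unfolding abs_mult by (intro mult_mono assms; simp)+
  then show ?thesis by (smt (verit) distrib_right abs_triangle_ineq)
qed

lemma abs_squeeze_contrib_realrep_le:
  assumes "0 \<le> r"
  shows "\<bar>squeeze_contrib (realrep U) r q q' m\<bar> \<le> sinh (2*r) * cmod (U (q div 2) m) * cmod (U (q' div 2) m)"
  unfolding squeeze_contrib_def squeeze_weight_eq_sinh[OF assms, symmetric]
  by (rule abs_add_mult_le) (simp_all add: realrep_even realrep_odd[simplified] abs_Re_le_cmod abs_Im_le_cmod)

definition off_block :: "(nat \<Rightarrow> nat) \<Rightarrow> nat \<Rightarrow> (nat \<Rightarrow> nat \<Rightarrow> real) \<Rightarrow> nat \<Rightarrow> nat \<Rightarrow> real" where
  "off_block lat \<alpha> A q q' = (if lat (q div 2) = \<alpha> \<and> lat (q' div 2) = \<alpha> then 0 else A q q')"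

lemma exact_minus_approx_cov:
  assumes U: "unitary_mat M U"
    and lat: "\<forall>j<M. lat j < N"
    and s: "\<forall>\<alpha><N. s \<alpha> < M \<and> lat (s \<alpha>) = \<alpha>"
    and q: "q < 2*M" "q' < 2*M"
  shows "exact_cov M N s r U q q' - approx_cov M lat s r U q q'
       = (\<Sum>\<alpha><N. off_block lat \<alpha> (\<lambda>q q'. squeeze_contrib (realrep U) r q q' (s \<alpha>)) q q')"
proof -
  define G where "G \<alpha> = squeeze_contrib (realrep U) r q q' (s \<alpha>)" for \<alpha>
  define P where "P = (\<Sum>a<2*M. realrep U q a * realrep U q' a)"
  have "inj_on s {..<N}" by (rule inj_onI) (metis lessThan_iff s)
  moreover have "s ` {..<N} \<subseteq> {..<M}" using s by auto
  ultimately have exact: "exact_cov M N s r U q q' = 1/2 * P + (\<Sum>\<alpha><N. G \<alpha>)"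
    by (simp add: exact_cov_def cov_transform_sq_input sum.reindex P_def G_def)
  show ?thesis
  proof (cases "lat (q div 2) = lat (q' div 2)")
    case True
    define \<beta> where "\<beta> = lat (q div 2)"
    have \<beta>: "\<beta> < N" using lat q unfolding \<beta>_def by auto
    then have "approx_cov M lat s r U q q' = 1/2 * P + G \<beta>"
      using True s by (simp add: approx_cov_def cov_transform_sq_input \<beta>_def P_def G_def)
    moreover have "(\<Sum>\<alpha><N. off_block lat \<alpha> (\<lambda>q q'. squeeze_contrib (realrep U) r q q' (s \<alpha>)) q q')
        = (\<Sum>\<alpha><N. G \<alpha> - (if \<alpha> = \<beta> then G \<alpha> else 0))"
      by (intro sum.cong refl) (auto simp: off_block_def G_def \<beta>_def True)
    ultimately show ?thesis using exact \<beta> by (simp add: sum_subtractf)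
  next
    case False
    then have "P = 0" unfolding P_def using q by (intro realrep_rows_orthogonal[OF U]) auto
    moreover have "(\<Sum>\<alpha><N. off_block lat \<alpha> (\<lambda>q q'. squeeze_contrib (realrep U) r q q' (s \<alpha>)) q q')
        = (\<Sum>\<alpha><N. G \<alpha>)"
      using False by (intro sum.cong) (auto simp: off_block_def G_def)
    ultimately show ?thesis
      using exact False by (simp add: approx_cov_def)
  qed
qed

lemma sum_product_off_block_le:
  fixes f :: "'a \<Rightarrow> real"
  assumes "finite A" and "\<And>j. j \<in> A \<Longrightarrow> 0 \<le> f j" and "sum f A \<le> 1"
  shows "(\<Sum>j\<in>A. \<Sum>j'\<in>A. if P j \<and> P j' then 0 else f j * f j') \<le> 2 * (\<Sum>j\<in>{j\<in>A. \<not> P j}. f j)"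
proof -
  define a where "a = (\<Sum>j\<in>{j\<in>A. P j}. f j)"
  define b where "b = (\<Sum>j\<in>{j\<in>A. \<not> P j}. f j)"
  have split: "sum f A = a + b"
    unfolding a_def b_def using assms(1)
    by (simp add: sum.inter_filter flip: sum.distrib) (intro sum.cong; simp)
  have "0 \<le> a" "0 \<le> b" unfolding a_def b_def using assms(2) by (auto intro: sum_nonneg)
  have "(\<Sum>j\<in>A. \<Sum>j'\<in>A. if P j \<and> P j' then 0 else f j * f j')
      = (\<Sum>j\<in>A. \<Sum>j'\<in>A. f j * f j' - (if P j then f j else 0) * (if P j' then f j' else 0))"
    by (intro sum.cong refl) simp
  also have "\<dots> = sum f A * sum f A - a * a"
    using assms(1) by (simp add: sum_subtractf sum_product a_def sum.inter_filter)
  also have "\<dots> = b * (2 * a + b)" unfolding split by (simp add: algebra_simps)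
  also have "\<dots> \<le> b * 2"
    using \<open>0 \<le> a\<close> \<open>0 \<le> b\<close> assms(3) split by (intro mult_left_mono) auto
  finally show ?thesis by (simp add: b_def)
qed

lemma frob_sq_off_block_squeeze_le:
  assumes U: "unitary_mat M U" and s: "s \<alpha> < M" and r: "0 \<le> r"
  shows "frob_sq M (off_block lat \<alpha> (\<lambda>q q'. squeeze_contrib (realrep U) r q q' (s \<alpha>)))
       \<le> 8 * (sinh (2*r))^2 * leakage M lat s U \<alpha>"
proof -
  define f where "f j = (cmod (U j (s \<alpha>)))^2" for j
  define H where "H j j' = (if lat j = \<alpha> \<and> lat j' = \<alpha> then 0 else f j * f j')" for j j'
  have entry: "(off_block lat \<alpha> (\<lambda>q q'. squeeze_contrib (realrep U) r q q' (s \<alpha>)) q q')^2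
      \<le> (sinh (2*r))^2 * H (q div 2) (q' div 2)" for q q'
  proof -
    have "\<bar>squeeze_contrib (realrep U) r q q' (s \<alpha>)\<bar>^2
        \<le> (sinh (2*r) * cmod (U (q div 2) (s \<alpha>)) * cmod (U (q' div 2) (s \<alpha>)))^2"
      using abs_squeeze_contrib_realrep_le[OF r] by (intro power_mono) auto
    then show ?thesis by (simp add: off_block_def H_def f_def power_mult_distrib)
  qed
  have "frob_sq M (off_block lat \<alpha> (\<lambda>q q'. squeeze_contrib (realrep U) r q q' (s \<alpha>)))
      \<le> (\<Sum>q<2*M. \<Sum>q'<2*M. (sinh (2*r))^2 * H (q div 2) (q' div 2))"
    unfolding frob_sq_def by (intro sum_mono entry)
  also have "\<dots> = (\<Sum>q<2*M. 2 * (\<Sum>j'<M. (sinh (2*r))^2 * H (q div 2) j'))"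
    by (intro sum.cong refl) (rule sum_lessThan_double_div2)
  also have "\<dots> = 4 * (sinh (2*r))^2 * (\<Sum>j<M. \<Sum>j'<M. H j j')"
    by (subst sum_lessThan_double_div2) (simp add: sum_distrib_left mult.assoc)
  also have "(\<Sum>j<M. \<Sum>j'<M. H j j') \<le> 2 * leakage M lat s U \<alpha>"
  proof -
    have "sum f {..<M} \<le> 1" unfolding f_def by (rule unitary_mat_column_sq_sum_le_1[OF U s])
    moreover have "{j \<in> {..<M}. lat j \<noteq> \<alpha>} = {j. j < M \<and> lat j \<noteq> \<alpha>}" by auto
    ultimately show ?thesis
      using sum_product_off_block_le[of "{..<M}" f "\<lambda>j. lat j = \<alpha>"]
      by (simp add: H_def f_def leakage_def)
  qed
  finally show ?thesis by (simp add: mult_left_mono)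
qed

lemma frob_sq_sum_le:
  "frob_sq M (\<lambda>q q'. \<Sum>\<alpha><N. A \<alpha> q q') \<le> real N * (\<Sum>\<alpha><N. frob_sq M (A \<alpha>))"
proof -
  have "frob_sq M (\<lambda>q q'. \<Sum>\<alpha><N. A \<alpha> q q') \<le> (\<Sum>q<2*M. \<Sum>q'<2*M. real N * (\<Sum>\<alpha><N. (A \<alpha> q q')^2))"
    unfolding frob_sq_def
    using sum_squared_le_sum_of_squares[of "\<lambda>\<alpha>. A \<alpha> _ _" "{..<N}"]
    by (intro sum_mono) (simp add: mult.commute)
  also have "\<dots> = real N * (\<Sum>\<alpha><N. frob_sq M (A \<alpha>))"
    unfolding frob_sq_def sum_distrib_left[symmetric]
    by (simp add: sum.swap[of _ "{..<N}" "{..<2*M}"])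
  finally show ?thesis .
qed

lemma four_le_sq_add_two_sqrt:
  assumes "0 \<le> (x::real)"
  shows "4 * x \<le> (x + 2 * sqrt x)^2"
proof -
  have "(x + 2 * sqrt x)^2 = x^2 + 4 * x * sqrt x + 4 * x"
    using assms by (simp add: power2_eq_square algebra_simps)
  then show ?thesis using assms by simp
qed

theorem lemma3:
  fixes M N :: nat and lat s :: "nat \<Rightarrow> nat" and r :: real
    and U :: "nat \<Rightarrow> nat \<Rightarrow> complex"
  assumes "0 < N" and "N dvd M"
    and "\<forall>j<M. lat j < N"
    and "\<forall>\<alpha><N. card {j. j < M \<and> lat j = \<alpha>} = M div N"
    and "\<forall>\<alpha><N. s \<alpha> < M \<and> lat (s \<alpha>) = \<alpha>"
    and "unitary_mat M U"
    and "r > 0"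
  shows "frob_sq M (\<lambda>q q'. exact_cov M N s r U q q' - approx_cov M lat s r U q q')
         \<le> exp (4*r) * (real N)^4 *
            (Max (leakage M lat s U ` {..<N}) + 2 * sqrt (Max (leakage M lat s U ` {..<N})))^2"
proof -
  \<comment> \<open>The sublattices need not have equal sizes.\<close>
  note N = assms(1) and lat = assms(3) and s = assms(5) and U = assms(6)
  define \<eta> where "\<eta> = Max (leakage M lat s U ` {..<N})"
  define w where "w = 8 * (sinh (2*r))^2"
  have leakage_le: "leakage M lat s U \<alpha> \<le> \<eta>" if "\<alpha> < N" for \<alpha>
    unfolding \<eta>_def using that by (intro Max_ge) auto
  have "0 \<le> leakage M lat s U 0" unfolding leakage_def by (intro sum_nonneg) auto
  with leakage_le[OF N] have "0 \<le> \<eta>" by linarith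
  have "frob_sq M (\<lambda>q q'. exact_cov M N s r U q q' - approx_cov M lat s r U q q')
      = frob_sq M (\<lambda>q q'. \<Sum>\<alpha><N. off_block lat \<alpha> (\<lambda>q q'. squeeze_contrib (realrep U) r q q' (s \<alpha>)) q q')"
    unfolding frob_sq_def by (intro sum.cong refl) (simp add: exact_minus_approx_cov[OF U lat s])
  also have "\<dots> \<le> real N * (\<Sum>\<alpha><N. w * leakage M lat s U \<alpha>)"
    using frob_sq_off_block_squeeze_le[OF U] s assms(7)
    by (intro order_trans[OF frob_sq_sum_le] mult_left_mono sum_mono) (auto simp: w_def)
  also have "\<dots> \<le> real N * (real N * (w * \<eta>))"
    using sum_mono[of "{..<N}" "\<lambda>\<alpha>. w * leakage M lat s U \<alpha>" "\<lambda>_. w * \<eta>"] leakage_le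
    by (intro mult_left_mono) (auto simp: w_def mult_left_mono)
  also have "\<dots> = (real N)^2 * (4 * (sinh (2*r))^2) * (2 * \<eta>)"
    by (simp add: w_def power2_eq_square)
  also have "\<dots> \<le> (real N)^4 * exp (4*r) * (4 * \<eta>)"
  proof -
    have "(real N)^2 \<le> (real N)^4" using N by (intro power_increasing) auto
    then show ?thesis
      using four_sinh_sq_le_exp[of r] assms(7) \<open>0 \<le> \<eta>\<close> by (intro mult_mono) auto
  qed
  also have "\<dots> \<le> (real N)^4 * exp (4*r) * (\<eta> + 2 * sqrt \<eta>)^2"
    using four_le_sq_add_two_sqrt[OF \<open>0 \<le> \<eta>\<close>] by (intro mult_left_mono) auto
  finally show ?thesis by (simp add: \<eta>_def mult.commute mult.left_commute)
qed

end
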